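(* Let $t(z),d(z)\in\mathbb{C}[[z]]$ be such that $t^2-4d$ has a simple zero at $z=0$. Let $A(z,\lambda)\in\mathfrak{gl}_2(\mathbb{C}[[z,\lambda]])$ with $\operatorname{tr}A(z,0)=t(z)$, $\det A(z,0)=d(z)$, and let $R(z,\lambda)\in\mathrm{GL}_2(\mathbb{C}((z))[[\lambda]])$ with $R(z,0)\in\mathrm{GL}_2(\mathbb{C}[[z]])$. Set $\mathrm{Gauge}_\lambda(A,R)=R^{-1}AR+\lambda R^{-1}\frac{dR}{dz}\in\mathfrak{gl}_2(\mathbb{C}((z))[[\lambda]])$. If $\mathrm{Gauge}_\lambda(A,R)\in\mathfrak{gl}_2(\mathbb{C}[[z,\lambda]])$, then $R(z,\lambda)\in\mathrm{GL}_2(\mathbb{C}[[z,\lambda]])$. *)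

theory Defs
  imports "HOL-Analysis.Analysis" "HOL-Computational_Algebra.Formal_Laurent_Series"
begin

text \<open>A bivariate series in C[[z,lambda]] is represented as a power series in
  lambda whose coefficients are power series in z: type complex fps fps.
  C((z))[[lambda]] is represented as complex fls fps (power series in lambda with
  Laurent-series coefficients in z). 2x2 matrices are complex-valued entries of type _^2^2.\<close>

definition mat_map :: "('a \<Rightarrow> 'b) \<Rightarrow> 'a^'n^'m \<Rightarrow> 'b^'n^'m" where
  "mat_map f M = (\<chi> i j. f (M $ i $ j))"

definition incl :: "complex fps fps \<Rightarrow> complex fls fps" where
  "incl F = Abs_fps (\<lambda>n. fps_to_fls (F $ n))"

definition ddz :: "complex fls fps \<Rightarrow> complex fls fps" where
  "ddz F = Abs_fps (\<lambda>n. fls_deriv (F $ n))"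

definition at_lambda0 :: "'a::zero fps \<Rightarrow> 'a" where
  "at_lambda0 F = F $ 0"

definition gauge :: "complex fps fps^2^2 \<Rightarrow> complex fls fps^2^2 \<Rightarrow> complex fls fps^2^2" where
  "gauge A R = matrix_inv R ** mat_map incl A ** R
      + mat_map (\<lambda>x. fps_X * x) (matrix_inv R ** mat_map ddz R)"

end

theory Submission
  imports Defs
begin

(*
  Gauging first by the holomorphic and invertible R(z,0), one may assume R(z,0) = 1. The
  lambda-coefficients X_n of R then satisfy a recursion with holomorphic data whose leading
  matrix B = Gauge(A,R)(z,0) is conjugate to A(z,0), so that tr B = t and det B = d.
  Suppose X_0, ..., X_n are holomorphic and put K = X_(n+1). The equation for lambda^(n+1)
  says that the commutator [K, B] is holomorphic; the trace of the equation for lambda^(n+2),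
  and of its product with B, says that tr K' and tr (B K') are holomorphic.
  Since the discriminant D = t^2 - 4d of B has a simple zero, B(0) is not scalar, and so
  K = x + s P + H with P = 2B - t and H holomorphic. Then tr K' = 2x' + tr H' shows that x is
  holomorphic, and tr (P K') = 2 D s' + D' s + tr (P H') shows that s is holomorphic too.
*)

unbundle fps_syntax

lemma matrix_add_rdistrib:
  fixes A B :: "'a::semiring_1^'n^'m" and C :: "'a^'k^'n"
  shows "(A + B) ** C = A ** C + B ** C"
  by (vector matrix_matrix_mult_def sum.distrib[symmetric] field_simps)

lemma matrix_diff_ldistrib:
  fixes A :: "'a::ring_1^'n^'m" and B C :: "'a^'k^'n"
  shows "A ** (B - C) = A ** B - A ** C"
  by (vector matrix_matrix_mult_def sum_subtractf[symmetric] field_simps)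

lemma matrix_diff_rdistrib:
  fixes A B :: "'a::ring_1^'n^'m" and C :: "'a^'k^'n"
  shows "(A - B) ** C = A ** C - B ** C"
  by (vector matrix_matrix_mult_def sum_subtractf[symmetric] field_simps)

lemma matrix_mul_sum_left:
  fixes A :: "'a::semiring_1^'n^'m" and B :: "'i \<Rightarrow> 'a^'k^'n"
  shows "A ** sum B S = (\<Sum>i\<in>S. A ** B i)"
  by (induction S rule: infinite_finite_induct) (simp_all add: matrix_add_ldistrib)

lemma matrix_mul_mat_map_scale:
  fixes M :: "'a::comm_semiring_1^'n^'m" and N :: "'a^'k^'n"
  shows "M ** mat_map (\<lambda>x. c * x) N = mat_map (\<lambda>x. c * x) (M ** N)"
  by (simp add: vec_eq_iff mat_map_def matrix_matrix_mult_def sum_distrib_left mult.left_commute)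

lemma matrix_inv_right: "invertible A \<Longrightarrow> A ** matrix_inv A = mat 1"
  and matrix_inv_left: "invertible A \<Longrightarrow> matrix_inv A ** A = mat 1"
  unfolding invertible_def matrix_inv_def by (metis (mono_tags, lifting) someI_ex)+

lemma trace_commutator: "trace (A ** B - B ** A) = 0"
  for A B :: "'a::comm_ring_1^'n^'n"
  by (simp add: trace_sub trace_mul_sym[of A B])

lemma trace_mult_commutator:
  fixes P Q X :: "'a::comm_ring_1^'n^'n"
  shows "trace (P ** (Q ** X - X ** Q)) = trace (X ** (P ** Q - Q ** P))"
proof -
  have "trace (P ** (Q ** X - X ** Q)) = trace ((P ** Q) ** X) - trace (P ** X ** Q)"
    by (simp add: matrix_diff_ldistrib trace_sub matrix_mul_assoc)
  also have "\<dots> = trace (X ** (P ** Q)) - trace (X ** (Q ** P))"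
    by (metis matrix_mul_assoc trace_mul_sym)
  finally show ?thesis
    by (simp add: matrix_diff_ldistrib trace_sub)
qed

lemma trace_commutator_self:
  fixes K B :: "'a::comm_ring_1^'n^'n"
  shows "trace (K ** (K ** B - B ** K)) = 0"
  using trace_mult_commutator[of K K B] by (simp add: trace_def)

lemma trace_commutator_square:
  fixes K B :: "'a::comm_ring_1^'n^'n"
  shows "trace ((K ** B - B ** K) ** (K ** B - B ** K)) = 2 * trace (K ** B ** (K ** B - B ** K))"
proof -
  have "trace (B ** K ** (K ** B - B ** K)) = - trace (K ** B ** (K ** B - B ** K))"
  proof -
    have "trace (B ** K ** (K ** B)) = trace (K ** B ** (B ** K))"
      by (metis matrix_mul_assoc trace_mul_sym)
    moreover have "trace (B ** K ** (B ** K)) = trace (K ** B ** (K ** B))"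
      by (metis matrix_mul_assoc trace_mul_sym)
    ultimately show ?thesis
      by (simp add: matrix_diff_ldistrib trace_sub)
  qed
  then show ?thesis
    by (simp add: matrix_diff_rdistrib trace_sub)
qed

lemma trace_commutator_expansion:
  fixes Y B K A X W :: "'a::comm_ring_1^'n^'n"
  assumes D: "D = Y ** B - B ** Y + (K ** A - A ** K) + K ** (B ** X - X ** B) + W"
  shows "trace D = trace (X ** (K ** B - B ** K)) + trace W"
    and "trace (B ** D) =
      trace (X ** B ** (K ** B - B ** K)) - trace (A ** (K ** B - B ** K)) + trace (B ** W)"
proof -
  show "trace D = trace (X ** (K ** B - B ** K)) + trace W"
    unfolding D by (simp add: trace_add trace_commutator trace_mult_commutator[of K B X])
  have "trace (B ** (Y ** B)) = trace (B ** (B ** Y))"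
    by (metis matrix_mul_assoc trace_mul_sym)
  then have "trace (B ** (Y ** B - B ** Y)) = 0"
    by (simp add: matrix_diff_ldistrib trace_sub)
  moreover have "trace (B ** (K ** A - A ** K)) = trace (A ** (B ** K - K ** B))"
    by (rule trace_mult_commutator)
  moreover have "\<dots> = - trace (A ** (K ** B - B ** K))"
    by (simp add: matrix_diff_ldistrib trace_sub)
  moreover have "trace (B ** (K ** (B ** X - X ** B))) = trace (X ** B ** (K ** B - B ** K))"
    using trace_mult_commutator[of "B ** K" B X]
    by (simp add: matrix_mul_assoc matrix_diff_ldistrib)
  ultimately show "trace (B ** D) =
      trace (X ** B ** (K ** B - B ** K)) - trace (A ** (K ** B - B ** K)) + trace (B ** W)"
    unfolding D by (simp add: matrix_add_ldistrib trace_add)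
qed

lemma trace_similar:
  fixes M N P :: "'a::comm_ring_1^'n^'n"
  assumes "M ** N = mat 1"
  shows "trace (N ** P ** M) = trace P"
  by (metis assms matrix_mul_assoc matrix_mul_lid trace_mul_sym)

lemma det_similar:
  fixes M N P :: "'a::comm_ring_1^'n^'n"
  assumes "M ** N = mat 1"
  shows "det (N ** P ** M) = det P"
proof -
  have "det M * det N = 1"
    using assms by (metis det_I det_mul)
  moreover have "det (N ** P ** M) = det P * (det M * det N)"
    by (simp add: det_mul mult_ac)
  ultimately show ?thesis
    by simp
qed

lemma is_unit_det_of_invertible:
  fixes A :: "'a::comm_ring_1^'n^'n"
  assumes "invertible A"
  shows "det A dvd 1"
proof -
  obtain B where "A ** B = mat 1"
    using assms by (auto simp: invertible_def)
  then have "det A * det B = 1"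
    by (metis det_I det_mul)
  then show ?thesis
    by (metis dvdI)
qed

lemma invertible_of_is_unit_det:
  fixes S :: "'a::comm_ring_1^2^2"
  assumes "det S dvd 1"
  shows "invertible S"
proof -
  obtain u where u: "det S * u = 1"
    using assms by (metis dvdE)
  define T :: "'a^2^2" where "T = (\<chi> i j. u * (if i = 1 then (if j = 1 then S$2$2 else - S$1$2)
    else (if j = 1 then - S$2$1 else S$1$1)))"
  have "S ** T = mat 1" and "T ** S = mat 1"
    using u by (simp_all add: vec_eq_iff forall_2 T_def matrix_matrix_mult_def sum_2 mat_def det_2
        algebra_simps)
  then show ?thesis
    unfolding invertible_def by blast
qed

section \<open>Laurent series without principal part\<close>

definition fls_is_fps :: "'a::zero fls \<Rightarrow> bool" where
  "fls_is_fps f \<longleftrightarrow> (\<forall>n<0. f $$ n = 0)"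

lemma fls_is_fps_iff_subdegree: "fls_is_fps f \<longleftrightarrow> 0 \<le> fls_subdegree f"
  unfolding fls_is_fps_def
proof
  assume "\<forall>n<0. f $$ n = 0"
  then show "0 \<le> fls_subdegree f" by (intro fls_subdegree_ge0I) auto
next
  assume "0 \<le> fls_subdegree f"
  then show "\<forall>n<0. f $$ n = 0" by simp
qed

lemma fps_to_fls_regpart_of_is_fps: "fls_is_fps f \<Longrightarrow> fps_to_fls (fls_regpart f) = f"
  by (simp add: fls_is_fps_iff_subdegree)

lemma fls_is_fps_fps_to_fls [simp]: "fls_is_fps (fps_to_fls f)"
  by (simp add: fls_is_fps_def)

lemma fls_is_fps_0 [simp]: "fls_is_fps 0"
  and fls_is_fps_1 [simp]: "fls_is_fps 1"
  by (simp_all add: fls_is_fps_def)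

lemma fls_is_fps_add: "fls_is_fps f \<Longrightarrow> fls_is_fps g \<Longrightarrow> fls_is_fps (f + g)"
  by (simp add: fls_is_fps_def)

lemma fls_is_fps_diff: "fls_is_fps f \<Longrightarrow> fls_is_fps g \<Longrightarrow> fls_is_fps (f - g)"
  and fls_is_fps_uminus: "fls_is_fps f \<Longrightarrow> fls_is_fps (- f)"
  by (simp_all add: fls_is_fps_def)

lemma fls_is_fps_mult:
  fixes f g :: "'a::semiring_1 fls"
  shows "fls_is_fps f \<Longrightarrow> fls_is_fps g \<Longrightarrow> fls_is_fps (f * g)"
  by (simp add: fls_is_fps_iff_subdegree fls_mult_subdegree_ge_0)

lemma fls_is_fps_sum: "(\<And>i. i \<in> S \<Longrightarrow> fls_is_fps (f i)) \<Longrightarrow> fls_is_fps (sum f S)"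
proof (induction S rule: infinite_finite_induct)
  case (insert x F)
  then show ?case by (simp add: fls_is_fps_add)
qed simp_all

lemma fls_is_fps_deriv: "fls_is_fps f \<Longrightarrow> fls_is_fps (fls_deriv f)"
  unfolding fls_is_fps_def
proof (intro allI impI)
  fix n :: int
  assume f: "\<forall>n<0. f $$ n = 0" and "n < 0"
  show "fls_deriv f $$ n = 0"
  proof (cases "n = -1")
    case False
    then have "f $$ (n + 1) = 0" using f \<open>n < 0\<close> by simp
    then show ?thesis by simp
  qed simp
qed

lemma fls_is_fps_of_double:
  fixes f :: "'a::{ring_char_0, ring_no_zero_divisors} fls"
  shows "fls_is_fps (f + f) \<Longrightarrow> fls_is_fps f"
  by (simp add: fls_is_fps_def flip: mult_2)

lemma fls_is_fps_of_deriv: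
  fixes f :: "'a::{ring_char_0, ring_no_zero_divisors} fls"
  assumes "fls_is_fps (fls_deriv f)"
  shows "fls_is_fps f"
  unfolding fls_is_fps_def
proof (intro allI impI)
  fix n :: int
  assume "n < 0"
  then have "fls_deriv f $$ (n - 1) = 0"
    using assms \<open>n < 0\<close> by (simp add: fls_is_fps_def del: fls_deriv_nth)
  then have "of_int n * f $$ n = 0"
    by simp
  then show "f $$ n = 0"
    using \<open>n < 0\<close> by simp
qed

lemma fls_is_fps_cancel_left:
  fixes b k :: "'a::field fls"
  assumes "fls_is_fps b" and "b $$ 0 \<noteq> 0" and "fls_is_fps (b * k)"
  shows "fls_is_fps k"
proof -
  define u where "u = fps_to_fls (inverse (fls_regpart b))"
  have "u * b = fps_to_fls (inverse (fls_regpart b) * fls_regpart b)"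
    using assms(1) by (simp add: u_def fls_times_fps_to_fls fps_to_fls_regpart_of_is_fps)
  also have "\<dots> = 1"
    using assms(2) by (simp add: inverse_mult_eq_1)
  finally have "u * (b * k) = k"
    by (simp flip: mult.assoc)
  moreover have "fls_is_fps (u * (b * k))"
    using assms(3) by (simp add: u_def fls_is_fps_mult)
  ultimately show ?thesis
    by (simp only:)
qed

lemma fls_times_nth_lower_bounds:
  fixes f g :: "'a::semiring_0 fls"
  assumes f: "\<And>i. i < p \<Longrightarrow> f $$ i = 0" and g: "\<And>j. j < q \<Longrightarrow> g $$ j = 0"
  shows "(f * g) $$ (p + q) = f $$ p * g $$ q"
proof (cases "f = 0 \<or> g = 0")
  case False
  then have "p \<le> fls_subdegree f" "q \<le> fls_subdegree g"
    using f g by (auto intro: fls_subdegree_geI)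
  then consider "p = fls_subdegree f" "q = fls_subdegree g"
    | "p < fls_subdegree f \<or> q < fls_subdegree g" "p + q < fls_subdegree f + fls_subdegree g"
    by linarith
  then show ?thesis
    by cases (auto simp: fls_times_nth_eq0)
qed auto

text \<open>If \<open>s\<close> had a pole, with lowest coefficient \<open>s\<^sub>m\<close> (\<open>m < 0\<close>), the coefficient
  of \<open>z\<^sup>m\<close> in \<open>2 E s' + E' s\<close> would be \<open>(2 m + 1) E\<^sub>1 s\<^sub>m \<noteq> 0\<close>.\<close>

lemma fls_is_fps_of_simple_zero_twisted_deriv:
  fixes E s :: "'a::{idom, ring_char_0} fls"
  assumes E: "fls_subdegree E = 1"
    and twisted: "fls_is_fps (2 * E * fls_deriv s + fls_deriv E * s)"
  shows "fls_is_fps s"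
proof (rule ccontr)
  assume "\<not> fls_is_fps s"
  define m where "m = fls_subdegree s"
  have "m < 0" and "s \<noteq> 0"
    using \<open>\<not> fls_is_fps s\<close> by (auto simp: m_def fls_is_fps_iff_subdegree)
  have "E \<noteq> 0"
    using E by auto
  have E_low: "E $$ i = 0" if "i < 1" for i
    using E that by simp
  have s_low: "s $$ j = 0" if "j < m" for j
    using that by (simp add: m_def)
  have "(E * fls_deriv s) $$ (1 + (m - 1)) = E $$ 1 * fls_deriv s $$ (m - 1)"
    by (rule fls_times_nth_lower_bounds) (simp_all add: E_low s_low)
  then have Es': "(E * fls_deriv s) $$ m = of_int m * E $$ 1 * s $$ m"
    by (simp add: algebra_simps)
  have "(fls_deriv E * s) $$ (0 + m) = fls_deriv E $$ 0 * s $$ m"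
    by (rule fls_times_nth_lower_bounds) (simp_all add: E_low s_low)
  then have E's: "(fls_deriv E * s) $$ m = E $$ 1 * s $$ m"
    by simp
  have "of_int (2 * m + 1) * (E $$ 1 * s $$ m) =
      (E * fls_deriv s) $$ m + (E * fls_deriv s) $$ m + (fls_deriv E * s) $$ m"
    unfolding Es' E's by (simp add: algebra_simps)
  also have "\<dots> = (2 * E * fls_deriv s + fls_deriv E * s) $$ m"
    by (simp only: mult_2 distrib_right fls_plus_nth)
  also have "\<dots> = 0"
    using twisted \<open>m < 0\<close> by (simp add: fls_is_fps_def)
  finally have "of_int (2 * m + 1) * (E $$ 1 * s $$ m) = 0" .
  moreover have "(of_int (2 * m + 1) :: 'a) \<noteq> 0"
    by (simp only: of_int_eq_0_iff) presburger
  moreover have "E $$ 1 \<noteq> 0"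
    using \<open>E \<noteq> 0\<close> E by (metis nth_fls_subdegree_nonzero)
  moreover have "s $$ m \<noteq> 0"
    using \<open>s \<noteq> 0\<close> by (simp add: m_def)
  ultimately show False
    by simp
qed

lemma fls_nth_0_nonzero_of_simple_zero:
  fixes a b c :: "'a::idom fls"
  assumes "fls_is_fps a" "fls_is_fps b" "fls_is_fps c"
    and simple_zero: "fls_subdegree (a * a + b * c) = 1"
  shows "b $$ 0 \<noteq> 0 \<or> c $$ 0 \<noteq> 0"
proof (rule ccontr)
  assume "\<not> (b $$ 0 \<noteq> 0 \<or> c $$ 0 \<noteq> 0)"
  then have b0: "b $$ 0 = 0" and c0: "c $$ 0 = 0" by auto
  define e where "e = fls_regpart a * fls_regpart a + fls_regpart b * fls_regpart c"
  have "fps_to_fls e = a * a + b * c"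
    using assms(1-3) by (simp add: e_def fls_times_fps_to_fls fps_to_fls_regpart_of_is_fps)
  then have "subdegree e = 1" and "e \<noteq> 0"
    using simple_zero fls_subdegree_fls_to_fps[of e] by auto
  then have "e $ 0 = 0" and "e $ 1 \<noteq> 0"
    by (metis nth_subdegree_zero_iff zero_less_one nth_less_subdegree_zero)+
  have "e $ 0 = a $$ 0 * a $$ 0"
    by (simp add: e_def fps_mult_nth b0)
  with \<open>e $ 0 = 0\<close> have "a $$ 0 = 0" by simp
  have "e $ 1 = 0"
    by (simp add: e_def fps_mult_nth atLeast0_atMost_Suc \<open>a $$ 0 = 0\<close> b0 c0)
  with \<open>e $ 1 \<noteq> 0\<close> show False ..
qed

section \<open>Matrices of Laurent series\<close>

definition mat_is_fps :: "'a::zero fls^'n^'m \<Rightarrow> bool" where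
  "mat_is_fps M \<longleftrightarrow> (\<forall>i j. fls_is_fps (M $ i $ j))"

definition mat_deriv :: "'a::ring_1 fls^'n^'m \<Rightarrow> 'a fls^'n^'m" where
  "mat_deriv M = mat_map fls_deriv M"

lemma mat_is_fps_0 [simp]: "mat_is_fps 0"
  by (simp add: mat_is_fps_def)

lemma mat_is_fps_add: "mat_is_fps M \<Longrightarrow> mat_is_fps N \<Longrightarrow> mat_is_fps (M + N)"
  by (simp add: mat_is_fps_def fls_is_fps_add)

lemma mat_is_fps_diff: "mat_is_fps M \<Longrightarrow> mat_is_fps N \<Longrightarrow> mat_is_fps (M - N)"
  by (simp add: mat_is_fps_def fls_is_fps_diff)

lemma mat_is_fps_uminus: "mat_is_fps M \<Longrightarrow> mat_is_fps (- M)"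
  by (simp add: mat_is_fps_def fls_is_fps_uminus)

lemma mat_is_fps_mult:
  fixes M :: "'a::semiring_1 fls^'n^'m" and N :: "'a fls^'k^'n"
  shows "mat_is_fps M \<Longrightarrow> mat_is_fps N \<Longrightarrow> mat_is_fps (M ** N)"
  by (simp add: mat_is_fps_def matrix_matrix_mult_def fls_is_fps_sum fls_is_fps_mult)

lemma mat_is_fps_mat: "fls_is_fps x \<Longrightarrow> mat_is_fps (mat x)"
  by (simp add: mat_is_fps_def mat_def)

lemma mat_is_fps_sum: "(\<And>i. i \<in> S \<Longrightarrow> mat_is_fps (M i)) \<Longrightarrow> mat_is_fps (sum M S)"
  by (simp add: mat_is_fps_def fls_is_fps_sum)

lemma mat_is_fps_deriv: "mat_is_fps M \<Longrightarrow> mat_is_fps (mat_deriv M)"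
  by (simp add: mat_is_fps_def mat_deriv_def mat_map_def fls_is_fps_deriv)

lemma mat_is_fps_mat_map_fps_to_fls [simp]: "mat_is_fps (mat_map fps_to_fls M)"
  by (simp add: mat_is_fps_def mat_map_def)

lemma mat_is_fps_transpose [simp]: "mat_is_fps (transpose M) \<longleftrightarrow> mat_is_fps M"
  by (auto simp: mat_is_fps_def transpose_def)

lemma fls_is_fps_trace: "mat_is_fps M \<Longrightarrow> fls_is_fps (trace M)"
  by (simp add: mat_is_fps_def trace_def fls_is_fps_sum)

lemma mat_deriv_mult:
  fixes M :: "'a::comm_ring_1 fls^'n^'m" and N :: "'a fls^'k^'n"
  shows "mat_deriv (M ** N) = mat_deriv M ** N + M ** mat_deriv N"
  by (simp add: vec_eq_iff mat_deriv_def mat_map_def matrix_matrix_mult_def fls_deriv_sum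
      sum.distrib algebra_simps)

lemma mat_deriv_mat [simp]: "mat_deriv (mat c) = mat (fls_deriv c)"
  by (simp add: vec_eq_iff mat_deriv_def mat_map_def mat_def)

lemma fps_to_fls_sum: "fps_to_fls (sum f S) = (\<Sum>i\<in>S. fps_to_fls (f i))"
  by (induction S rule: infinite_finite_induct) simp_all

lemma mat_map_fps_to_fls_mult:
  fixes M :: "'a::comm_ring_1 fps^'n^'m" and N :: "'a fps^'k^'n"
  shows "mat_map fps_to_fls (M ** N) = mat_map fps_to_fls M ** mat_map fps_to_fls N"
  by (simp add: vec_eq_iff mat_map_def matrix_matrix_mult_def fps_to_fls_sum fls_times_fps_to_fls)

lemma mat_map_fps_to_fls_mat: "mat_map fps_to_fls (mat c) = mat (fps_to_fls c)"
  by (simp add: vec_eq_iff mat_map_def mat_def)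

lemma trace_mat_map_fps_to_fls: "trace (mat_map fps_to_fls M) = fps_to_fls (trace M)"
  for M :: "'a::comm_ring_1 fps^'n^'n"
  by (simp add: trace_def mat_map_def fps_to_fls_sum)

lemma det_mat_map_fps_to_fls: "det (mat_map fps_to_fls M) = fps_to_fls (det M)"
  for M :: "'a::comm_ring_1 fps^2^2"
  by (simp add: det_2 mat_map_def fls_times_fps_to_fls)

lemma commutator_is_fps_decomp_12:
  fixes P K :: "'a::field fls^2^2"
  assumes P: "mat_is_fps P" and unit: "P$1$2 $$ 0 \<noteq> 0"
    and comm: "mat_is_fps (K ** P - P ** K)"
  shows "\<exists>x s H. mat_is_fps H \<and> K = mat x + mat s ** P + H"
proof -
  have "P$1$2 \<noteq> 0"
    using unit by auto
  define s where "s = K$1$2 / P$1$2"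
  define x where "x = K$1$1 - s * P$1$1"
  define H where "H = K - mat x - mat s ** P"
  \<comment> \<open>The first row of \<open>H\<close> vanishes, so that of \<open>H P - P H\<close> is \<open>- P\<^sub>1\<^sub>2 (H\<^sub>2\<^sub>1, H\<^sub>2\<^sub>2)\<close>.\<close>
  have H1: "H$1$1 = 0" "H$1$2 = 0"
    using \<open>P$1$2 \<noteq> 0\<close> by (simp_all add: H_def x_def s_def mat_def matrix_matrix_mult_def sum_2)
  have "H ** P - P ** H = K ** P - P ** K"
    by (simp add: H_def vec_eq_iff forall_2 matrix_matrix_mult_def sum_2 mat_def algebra_simps)
  with comm have "fls_is_fps ((H ** P - P ** H)$1$1)" "fls_is_fps ((H ** P - P ** H)$1$2)"
    by (simp_all add: mat_is_fps_def)
  then have "fls_is_fps (P$1$2 * H$2$1)" "fls_is_fps (P$1$2 * H$2$2)"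
    using H1 fls_is_fps_uminus by (fastforce simp: matrix_matrix_mult_def sum_2)+
  then have "fls_is_fps (H$2$1)" "fls_is_fps (H$2$2)"
    using P unit by (auto simp: mat_is_fps_def intro: fls_is_fps_cancel_left)
  then have "mat_is_fps H"
    using H1 by (simp add: mat_is_fps_def forall_2)
  moreover have "K = mat x + mat s ** P + H"
    by (simp add: H_def)
  ultimately show ?thesis by blast
qed

lemma commutator_is_fps_decomp:
  fixes P K :: "'a::field fls^2^2"
  assumes P: "mat_is_fps P" and unit: "P$1$2 $$ 0 \<noteq> 0 \<or> P$2$1 $$ 0 \<noteq> 0"
    and comm: "mat_is_fps (K ** P - P ** K)"
  obtains x s H where "mat_is_fps H" and "K = mat x + mat s ** P + H"
proof -
  consider "P$1$2 $$ 0 \<noteq> 0" | "(transpose P)$1$2 $$ 0 \<noteq> 0"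
    using unit by (auto simp: transpose_def)
  then show ?thesis
  proof cases
    case 1
    then show ?thesis
      using commutator_is_fps_decomp_12[OF P _ comm] that by blast
  next
    case 2
    have "transpose K ** transpose P - transpose P ** transpose K = - transpose (K ** P - P ** K)"
      by (simp add: vec_eq_iff forall_2 transpose_def matrix_matrix_mult_def sum_2 algebra_simps)
    then have "mat_is_fps (transpose K ** transpose P - transpose P ** transpose K)"
      using comm by (simp add: mat_is_fps_uminus)
    then have "\<exists>x s H. mat_is_fps H \<and> transpose K = mat x + mat s ** transpose P + H"
      using P 2 by (intro commutator_is_fps_decomp_12) simp_all
    then obtain x s H where "mat_is_fps H" and "transpose K = mat x + mat s ** transpose P + H"
      by blast
    then have "K = mat x + mat s ** P + transpose H"
      by (simp add: vec_eq_iff forall_2 transpose_def matrix_matrix_mult_def sum_2 mat_def)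
    then show ?thesis
      using \<open>mat_is_fps H\<close> by (intro that[of "transpose H"]) simp_all
  qed
qed

lemma mat_is_fps_of_commutator_and_traces_traceless:
  fixes P K :: "'a::field_char_0 fls^2^2"
  assumes P: "mat_is_fps P" and traceless: "P$2$2 = - P$1$1"
    and simple_zero: "fls_subdegree (P$1$1 * P$1$1 + P$1$2 * P$2$1) = 1"
    and comm: "mat_is_fps (K ** P - P ** K)"
    and tr: "fls_is_fps (trace (mat_deriv K))"
    and tr_P: "fls_is_fps (trace (P ** mat_deriv K))"
  shows "mat_is_fps K"
proof -
  define D where "D = P$1$1 * P$1$1 + P$1$2 * P$2$1"
  have "P$1$2 $$ 0 \<noteq> 0 \<or> P$2$1 $$ 0 \<noteq> 0"
    using P simple_zero by (intro fls_nth_0_nonzero_of_simple_zero) (simp_all add: mat_is_fps_def)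
  then obtain x s H where H: "mat_is_fps H" and K: "K = mat x + mat s ** P + H"
    using commutator_is_fps_decomp[OF P _ comm] by blast
  have "fls_deriv x + fls_deriv x = trace (mat_deriv K) - trace (mat_deriv H)"
    unfolding K by (simp add: trace_def sum_2 mat_deriv_def mat_map_def mat_def matrix_matrix_mult_def
        traceless)
  moreover have "fls_is_fps (trace (mat_deriv K) - trace (mat_deriv H))"
    by (rule fls_is_fps_diff[OF tr fls_is_fps_trace[OF mat_is_fps_deriv[OF H]]])
  ultimately have "fls_is_fps (fls_deriv x + fls_deriv x)"
    by simp
  then have x: "fls_is_fps x"
    by (rule fls_is_fps_of_deriv[OF fls_is_fps_of_double])
  have "2 * D * fls_deriv s + fls_deriv D * s = trace (P ** mat_deriv K) - trace (P ** mat_deriv H)"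
    unfolding K D_def by (simp add: trace_def sum_2 mat_deriv_def mat_map_def mat_def
        matrix_matrix_mult_def traceless algebra_simps)
  moreover have "fls_is_fps (trace (P ** mat_deriv K) - trace (P ** mat_deriv H))"
    by (rule fls_is_fps_diff[OF tr_P fls_is_fps_trace[OF mat_is_fps_mult[OF P mat_is_fps_deriv[OF H]]]])
  ultimately have "fls_is_fps (2 * D * fls_deriv s + fls_deriv D * s)"
    by simp
  then have s: "fls_is_fps s"
    by (rule fls_is_fps_of_simple_zero_twisted_deriv[rotated]) (use simple_zero in \<open>simp add: D_def\<close>)
  show ?thesis
    unfolding K using x s P H by (intro mat_is_fps_add mat_is_fps_mult mat_is_fps_mat)
qed

lemma mat_is_fps_of_commutator_and_traces:
  fixes B K :: "'a::field_char_0 fls^2^2"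
  assumes B: "mat_is_fps B"
    and simple_zero: "fls_subdegree ((trace B)\<^sup>2 - 4 * det B) = 1"
    and comm: "mat_is_fps (K ** B - B ** K)"
    and tr: "fls_is_fps (trace (mat_deriv K))"
    and tr_B: "fls_is_fps (trace (B ** mat_deriv K))"
  shows "mat_is_fps K"
proof -
  define P where "P = B + B - mat (trace B)"
  have P_entries: "P$1$1 = B$1$1 - B$2$2" "P$1$2 = B$1$2 + B$1$2"
      "P$2$1 = B$2$1 + B$2$1" "P$2$2 = B$2$2 - B$1$1"
    by (simp_all add: P_def trace_def sum_2 mat_def)
  show ?thesis
  proof (rule mat_is_fps_of_commutator_and_traces_traceless[OF _ _ _ _ tr])
    show "mat_is_fps P"
      unfolding P_def using B by (intro mat_is_fps_diff mat_is_fps_add mat_is_fps_mat fls_is_fps_trace)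
    show "P$2$2 = - P$1$1"
      by (simp add: P_entries)
    have "P$1$1 * P$1$1 + P$1$2 * P$2$1 = (trace B)\<^sup>2 - 4 * det B"
      by (simp add: P_entries det_2 trace_def sum_2 power2_eq_square algebra_simps)
    then show "fls_subdegree (P$1$1 * P$1$1 + P$1$2 * P$2$1) = 1"
      using simple_zero by simp
    have "K ** P - P ** K = (K ** B - B ** K) + (K ** B - B ** K)"
      by (simp add: vec_eq_iff forall_2 matrix_matrix_mult_def sum_2 P_entries algebra_simps)
    then show "mat_is_fps (K ** P - P ** K)"
      using comm by (simp only: mat_is_fps_add)
    have "trace (P ** mat_deriv K) =
        trace (B ** mat_deriv K) + trace (B ** mat_deriv K) - trace B * trace (mat_deriv K)"
      by (simp add: trace_def sum_2 matrix_matrix_mult_def P_entries algebra_simps)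
    then show "fls_is_fps (trace (P ** mat_deriv K))"
      using tr tr_B fls_is_fps_trace[OF B]
      by (simp only: fls_is_fps_add fls_is_fps_diff fls_is_fps_mult)
  qed
qed

lemma fls_is_fps_traces_commutator_self:
  fixes K B :: "'a::{idom, ring_char_0} fls^'n^'n"
  assumes comm: "mat_is_fps (K ** B - B ** K)"
  shows "fls_is_fps (trace (K ** (K ** B - B ** K)))"
    and "fls_is_fps (trace (K ** B ** (K ** B - B ** K)))"
proof -
  show "fls_is_fps (trace (K ** (K ** B - B ** K)))"
    by (simp add: trace_commutator_self)
  have "fls_is_fps (2 * trace (K ** B ** (K ** B - B ** K)))"
    using fls_is_fps_trace[OF mat_is_fps_mult[OF comm comm]] by (simp add: trace_commutator_square)
  then have "fls_is_fps (trace (K ** B ** (K ** B - B ** K)) + trace (K ** B ** (K ** B - B ** K)))"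
    by (simp only: mult_2)
  then show "fls_is_fps (trace (K ** B ** (K ** B - B ** K)))"
    by (rule fls_is_fps_of_double)
qed

section \<open>Coefficient equations of a gauge transformation\<close>

text \<open>The equations between the coefficients of \<open>\<lambda>\<^sup>n\<close> in \<open>R G = A R + \<lambda> dR/dz\<close>, for
  \<open>R = \<Sum> R\<^sub>n \<lambda>\<^sup>n\<close>, \<open>A = \<Sum> A\<^sub>n \<lambda>\<^sup>n\<close> and \<open>G = \<Sum> G\<^sub>n \<lambda>\<^sup>n\<close>.\<close>

definition gauge_coeff_eqs ::
  "(nat \<Rightarrow> 'a::comm_ring_1 fls^'n^'n) \<Rightarrow> (nat \<Rightarrow> 'a fls^'n^'n) \<Rightarrow> (nat \<Rightarrow> 'a fls^'n^'n) \<Rightarrow> bool"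
where
  "gauge_coeff_eqs A R G \<longleftrightarrow> (\<forall>n. (\<Sum>i\<le>n. R i ** G (n - i)) =
     (\<Sum>i\<le>n. A i ** R (n - i)) + (if n = 0 then 0 else mat_deriv (R (n - 1))))"

lemma gauge_coeff_eqs_0: "gauge_coeff_eqs A R G \<Longrightarrow> R 0 ** G 0 = A 0 ** R 0"
  by (auto simp: gauge_coeff_eqs_def dest: spec[of _ 0])

lemma gauge_coeff_eqs_split:
  assumes eqs: "gauge_coeff_eqs A X G" and X0: "X 0 = mat 1"
  shows "X m ** G 0 - G 0 ** X m + (\<Sum>i<m. X i ** G (m - i) - A (m - i) ** X i) =
    (if m = 0 then 0 else mat_deriv (X (m - 1)))"
proof -
  have A0: "A 0 = G 0"
    using gauge_coeff_eqs_0[OF eqs] X0 by simp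
  have "(\<Sum>i\<le>m. A i ** X (m - i)) = (\<Sum>i\<le>m. A (m - i) ** X i)"
    by (rule sum.reindex_bij_witness[where i="\<lambda>i. m - i" and j="\<lambda>i. m - i"]) auto
  then have "(\<Sum>i\<le>m. A i ** X (m - i)) = G 0 ** X m + (\<Sum>i<m. A (m - i) ** X i)"
    by (simp add: A0 flip: lessThan_Suc_atMost)
  moreover have "(\<Sum>i\<le>m. X i ** G (m - i)) = X m ** G 0 + (\<Sum>i<m. X i ** G (m - i))"
    by (simp flip: lessThan_Suc_atMost)
  ultimately show ?thesis
    using eqs by (simp add: gauge_coeff_eqs_def sum_subtractf algebra_simps)
qed

context
  fixes A X G :: "nat \<Rightarrow> 'a::comm_ring_1 fls^'n^'n" and n :: nat
  assumes eqs: "gauge_coeff_eqs A X G" and X0: "X 0 = mat 1"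
    and A: "\<And>i. mat_is_fps (A i)" and G: "\<And>i. mat_is_fps (G i)"
    and IH: "\<And>j. j \<le> n \<Longrightarrow> mat_is_fps (X j)"
begin

lemma gauge_coeff_eqs_commutator: "mat_is_fps (X (Suc n) ** G 0 - G 0 ** X (Suc n))"
proof -
  have "X (Suc n) ** G 0 - G 0 ** X (Suc n) =
      mat_deriv (X n) - (\<Sum>i<Suc n. X i ** G (Suc n - i) - A (Suc n - i) ** X i)"
    using gauge_coeff_eqs_split[OF eqs X0, of "Suc n"] by (simp add: algebra_simps)
  moreover have "mat_is_fps (\<Sum>i<Suc n. X i ** G (Suc n - i) - A (Suc n - i) ** X i)"
    by (intro mat_is_fps_sum mat_is_fps_diff mat_is_fps_mult IH A G) auto
  ultimately show ?thesis
    by (simp add: mat_is_fps_diff mat_is_fps_deriv IH)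
qed

lemma gauge_coeff_eqs_deriv:
  obtains W where "mat_is_fps W"
    and "mat_deriv (X (Suc n)) = X (Suc (Suc n)) ** G 0 - G 0 ** X (Suc (Suc n))
      + (X (Suc n) ** A 1 - A 1 ** X (Suc n)) + X (Suc n) ** (G 0 ** X 1 - X 1 ** G 0) + W"
proof -
  define W where "W = (\<Sum>i<Suc n. X i ** G (Suc (Suc n) - i) - A (Suc (Suc n) - i) ** X i)"
  have "mat_is_fps W"
    unfolding W_def by (intro mat_is_fps_sum mat_is_fps_diff mat_is_fps_mult IH A G) auto
  have G1: "G 1 = A 1 + (G 0 ** X 1 - X 1 ** G 0)"
    using gauge_coeff_eqs_split[OF eqs X0, of 1] X0 by (simp add: algebra_simps)
  have "mat_deriv (X (Suc n)) = X (Suc (Suc n)) ** G 0 - G 0 ** X (Suc (Suc n))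
      + (X (Suc n) ** G 1 - A 1 ** X (Suc n)) + W"
    using gauge_coeff_eqs_split[OF eqs X0, of "Suc (Suc n)"] by (simp add: W_def algebra_simps)
  also have "X (Suc n) ** G 1 = X (Suc n) ** A 1 + X (Suc n) ** (G 0 ** X 1 - X 1 ** G 0)"
    by (simp only: G1 matrix_add_ldistrib)
  finally show ?thesis
    using that \<open>mat_is_fps W\<close> by (simp add: algebra_simps)
qed

end

lemma gauge_coeff_eqs_traces:
  fixes A X G :: "nat \<Rightarrow> 'a::{idom, ring_char_0} fls^'n^'n"
  assumes eqs: "gauge_coeff_eqs A X G" and X0: "X 0 = mat 1"
    and A: "\<And>i. mat_is_fps (A i)" and G: "\<And>i. mat_is_fps (G i)"
    and IH: "\<And>j. j \<le> n \<Longrightarrow> mat_is_fps (X j)"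
  shows "fls_is_fps (trace (mat_deriv (X (Suc n))))"
    and "fls_is_fps (trace (G 0 ** mat_deriv (X (Suc n))))"
proof -
  define K where "K = X (Suc n)"
  define \<Delta> where "\<Delta> = K ** G 0 - G 0 ** K"
  have \<Delta>: "mat_is_fps \<Delta>"
    unfolding \<Delta>_def K_def using eqs X0 A G IH by (rule gauge_coeff_eqs_commutator)
  obtain W where W: "mat_is_fps W" and K':
    "mat_deriv K = X (Suc (Suc n)) ** G 0 - G 0 ** X (Suc (Suc n))
      + (K ** A 1 - A 1 ** K) + K ** (G 0 ** X 1 - X 1 ** G 0) + W"
    unfolding K_def using eqs X0 A G IH by (rule gauge_coeff_eqs_deriv)
  have X1: "fls_is_fps (trace (X 1 ** \<Delta>)) \<and> fls_is_fps (trace (X 1 ** G 0 ** \<Delta>))"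
  proof (cases n)
    case 0
    then have "X 1 = K"
      by (simp add: K_def)
    then show ?thesis
      using fls_is_fps_traces_commutator_self[OF \<Delta>[unfolded \<Delta>_def]] by (simp add: \<Delta>_def)
  next
    case (Suc m)
    then have "mat_is_fps (X 1)"
      using IH by simp
    then show ?thesis
      using \<Delta> G by (intro conjI fls_is_fps_trace mat_is_fps_mult)
  qed
  have "trace (mat_deriv K) = trace (X 1 ** \<Delta>) + trace W"
    and "trace (G 0 ** mat_deriv K) = trace (X 1 ** G 0 ** \<Delta>) - trace (A 1 ** \<Delta>) + trace (G 0 ** W)"
    using trace_commutator_expansion[OF K'] by (simp_all add: \<Delta>_def)
  moreover have "fls_is_fps (trace W)" "fls_is_fps (trace (A 1 ** \<Delta>))" "fls_is_fps (trace (G 0 ** W))"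
    using W A G \<Delta> by (intro fls_is_fps_trace mat_is_fps_mult; simp)+
  ultimately show "fls_is_fps (trace (mat_deriv (X (Suc n))))"
    and "fls_is_fps (trace (G 0 ** mat_deriv (X (Suc n))))"
    using X1 by (simp_all add: K_def[symmetric] fls_is_fps_add fls_is_fps_diff)
qed

lemma gauge_coeff_eqs_normalized_mat_is_fps:
  fixes A X G :: "nat \<Rightarrow> 'a::field_char_0 fls^2^2"
  assumes eqs: "gauge_coeff_eqs A X G" and X0: "X 0 = mat 1"
    and A: "\<And>i. mat_is_fps (A i)" and G: "\<And>i. mat_is_fps (G i)"
    and simple_zero: "fls_subdegree ((trace (G 0))\<^sup>2 - 4 * det (G 0)) = 1"
  shows "mat_is_fps (X n)"
proof (induction n rule: less_induct)
  case (less n)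
  show ?case
  proof (cases n)
    case 0
    then show ?thesis
      by (simp add: X0 mat_is_fps_mat)
  next
    case (Suc m)
    have IH: "\<And>j. j \<le> m \<Longrightarrow> mat_is_fps (X j)"
      using less Suc by simp
    show ?thesis
      unfolding Suc using G simple_zero
    proof (rule mat_is_fps_of_commutator_and_traces)
      show "mat_is_fps (X (Suc m) ** G 0 - G 0 ** X (Suc m))"
        using eqs X0 A G IH by (rule gauge_coeff_eqs_commutator)
      show "fls_is_fps (trace (mat_deriv (X (Suc m))))"
        and "fls_is_fps (trace (G 0 ** mat_deriv (X (Suc m))))"
        using gauge_coeff_eqs_traces[OF eqs X0 A G IH] by simp_all
    qed
  qed
qed

lemma sum_atMost_if_1_matrix_mult:
  fixes C :: "'a::semiring_1^'n^'m" and Y :: "nat \<Rightarrow> 'a^'k^'n"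
  shows "(\<Sum>i\<le>n. (if i = 1 then C else 0) ** Y (n - i)) = (if n = 0 then 0 else C ** Y (n - 1))"
proof -
  have "(\<Sum>i\<le>n. (if i = 1 then C else 0) ** Y (n - i)) = (\<Sum>i\<le>n. if i = 1 then C ** Y (n - i) else 0)"
    by (rule sum.cong) simp_all
  then show ?thesis
    by (simp add: sum.delta)
qed

lemma gauge_coeff_eqs_conj:
  fixes M N :: "'a::comm_ring_1 fls^'n^'n"
  assumes eqs: "gauge_coeff_eqs A R G" and MN: "M ** N = mat 1" and NM: "N ** M = mat 1"
  shows "gauge_coeff_eqs (\<lambda>i. N ** A i ** M + (if i = 1 then N ** mat_deriv M else 0))
    (\<lambda>i. N ** R i) G"
  unfolding gauge_coeff_eqs_def
proof
  fix n
  define X where "X i = N ** R i" for i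
  have R: "R i = M ** X i" for i
    by (simp add: X_def matrix_mul_assoc MN)
  have "(\<Sum>i\<le>n. X i ** G (n - i)) = N ** (\<Sum>i\<le>n. R i ** G (n - i))"
    by (simp add: X_def matrix_mul_sum_left matrix_mul_assoc)
  also have "\<dots> = N ** (\<Sum>i\<le>n. A i ** R (n - i)) + N ** (if n = 0 then 0 else mat_deriv (R (n - 1)))"
    using eqs by (simp add: gauge_coeff_eqs_def matrix_add_ldistrib)
  also have "N ** (\<Sum>i\<le>n. A i ** R (n - i)) = (\<Sum>i\<le>n. (N ** A i ** M) ** X (n - i))"
    by (simp add: R matrix_mul_sum_left matrix_mul_assoc)
  also have "N ** (if n = 0 then 0 else mat_deriv (R (n - 1))) =
      (if n = 0 then 0 else N ** mat_deriv M ** X (n - 1)) + (if n = 0 then 0 else mat_deriv (X (n - 1)))"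
    by (simp add: R mat_deriv_mult matrix_add_ldistrib matrix_mul_assoc NM)
  finally show "(\<Sum>i\<le>n. X i ** G (n - i)) =
      (\<Sum>i\<le>n. (N ** A i ** M + (if i = 1 then N ** mat_deriv M else 0)) ** X (n - i))
      + (if n = 0 then 0 else mat_deriv (X (n - 1)))"
    by (simp only: matrix_add_rdistrib sum.distrib sum_atMost_if_1_matrix_mult add.assoc)
qed

lemma gauge_coeff_eqs_mat_is_fps:
  fixes A R G :: "nat \<Rightarrow> 'a::field_char_0 fls^2^2"
  assumes eqs: "gauge_coeff_eqs A R G"
    and A: "\<And>i. mat_is_fps (A i)" and G: "\<And>i. mat_is_fps (G i)"
    and R0: "R 0 = M" and MN: "M ** N = mat 1" and NM: "N ** M = mat 1"
    and M: "mat_is_fps M" and N: "mat_is_fps N"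
    and simple_zero: "fls_subdegree ((trace (A 0))\<^sup>2 - 4 * det (A 0)) = 1"
  shows "mat_is_fps (R n)"
proof -
  define A' where "A' i = N ** A i ** M + (if i = 1 then N ** mat_deriv M else 0)" for i
  have eqs': "gauge_coeff_eqs A' (\<lambda>i. N ** R i) G"
    unfolding A'_def using eqs MN NM by (rule gauge_coeff_eqs_conj)
  have X0: "N ** R 0 = mat 1"
    by (simp add: R0 NM)
  have A': "mat_is_fps (A' i)" for i
    unfolding A'_def using A M N
    by (intro mat_is_fps_add mat_is_fps_mult) (simp_all add: mat_is_fps_mult mat_is_fps_deriv)
  have "G 0 = N ** A 0 ** M"
  proof -
    have "N ** (M ** G 0) = N ** (A 0 ** M)"
      using gauge_coeff_eqs_0[OF eqs] R0 by simp
    then show ?thesis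
      by (simp add: matrix_mul_assoc NM)
  qed
  then have "fls_subdegree ((trace (G 0))\<^sup>2 - 4 * det (G 0)) = 1"
    using simple_zero by (simp add: trace_similar[OF MN] det_similar[OF MN])
  then have "mat_is_fps (N ** R n)"
    by (rule gauge_coeff_eqs_normalized_mat_is_fps[OF eqs' X0 A' G])
  with M have "mat_is_fps (M ** (N ** R n))"
    by (rule mat_is_fps_mult)
  then show ?thesis
    by (simp add: matrix_mul_assoc MN)
qed

section \<open>Power series in the deformation parameter\<close>

definition mat_coeff :: "nat \<Rightarrow> 'a::zero fps^'n^'m \<Rightarrow> 'a^'n^'m" where
  "mat_coeff n M = mat_map (\<lambda>F. F $ n) M"

lemma mat_coeff_add: "mat_coeff n (M + N) = mat_coeff n M + mat_coeff n N"
  by (simp add: vec_eq_iff mat_coeff_def mat_map_def)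

lemma mat_coeff_mult:
  fixes M :: "'a::comm_ring_1 fps^'n^'m" and N :: "'a fps^'k^'n"
  shows "mat_coeff n (M ** N) = (\<Sum>i\<le>n. mat_coeff i M ** mat_coeff (n - i) N)"
  by (simp add: vec_eq_iff mat_coeff_def mat_map_def matrix_matrix_mult_def fps_sum_nth fps_mult_nth
      atLeast0AtMost sum.swap[of _ UNIV])

lemma mat_coeff_mat_map_incl: "mat_coeff n (mat_map incl M) = mat_map fps_to_fls (mat_coeff n M)"
  by (simp add: vec_eq_iff mat_coeff_def mat_map_def incl_def)

lemma mat_coeff_mat_map_ddz: "mat_coeff n (mat_map ddz M) = mat_deriv (mat_coeff n M)"
  by (simp add: vec_eq_iff mat_coeff_def mat_map_def ddz_def mat_deriv_def)

lemma mat_coeff_mat_map_X_mult: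
  "mat_coeff n (mat_map (\<lambda>x. fps_X * x) M) = (if n = 0 then 0 else mat_coeff (n - 1) M)"
  for M :: "'a::comm_ring_1 fps^'n^'m"
  by (simp add: vec_eq_iff mat_coeff_def mat_map_def)

lemma gauge_coeff_eqs_of_gauge:
  assumes R: "invertible R" and G: "gauge A R = mat_map incl G"
  shows "gauge_coeff_eqs (\<lambda>n. mat_coeff n (mat_map incl A)) (\<lambda>n. mat_coeff n R)
    (\<lambda>n. mat_coeff n (mat_map incl G))"
proof -
  have "R ** mat_map incl G = (R ** matrix_inv R) ** mat_map incl A ** R
      + mat_map (\<lambda>x. fps_X * x) ((R ** matrix_inv R) ** mat_map ddz R)"
    by (simp add: G[symmetric] gauge_def matrix_add_ldistrib matrix_mul_assoc matrix_mul_mat_map_scale)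
  then have eq: "R ** mat_map incl G = mat_map incl A ** R + mat_map (\<lambda>x. fps_X * x) (mat_map ddz R)"
    by (simp add: matrix_inv_right[OF R])
  show ?thesis
    unfolding gauge_coeff_eqs_def
  proof
    fix n
    show "(\<Sum>i\<le>n. mat_coeff i R ** mat_coeff (n - i) (mat_map incl G)) =
        (\<Sum>i\<le>n. mat_coeff i (mat_map incl A) ** mat_coeff (n - i) R)
        + (if n = 0 then 0 else mat_deriv (mat_coeff (n - 1) R))"
      using arg_cong[OF eq, of "mat_coeff n"]
      by (simp only: mat_coeff_mult mat_coeff_add mat_coeff_mat_map_X_mult mat_coeff_mat_map_ddz)
  qed
qed

lemma is_unit_fps_of_is_unit_nth_0:
  fixes f :: "'a::comm_ring_1 fps"
  assumes "f $ 0 dvd 1"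
  shows "f dvd 1"
proof -
  obtain y where "f $ 0 * y = 1"
    using assms by (metis dvdE)
  then have "f * fps_right_inverse f y = 1"
    by (rule fps_right_inverse)
  then show ?thesis
    by (metis dvdI)
qed

lemma invertible_of_invertible_mat_coeff_0:
  fixes S :: "'a::comm_ring_1 fps^2^2"
  assumes "invertible (mat_coeff 0 S)"
  shows "invertible S"
proof -
  have "det S $ 0 = det (mat_coeff 0 S)"
    by (simp add: det_2 mat_coeff_def mat_map_def)
  then have "det S $ 0 dvd 1"
    using is_unit_det_of_invertible[OF assms] by simp
  then show ?thesis
    by (intro invertible_of_is_unit_det is_unit_fps_of_is_unit_nth_0)
qed

lemma mat_map_incl_of_mat_coeff_is_fps:
  assumes "\<And>n. mat_is_fps (mat_coeff n R)"
  obtains S where "R = mat_map incl S" and "mat_map fps_to_fls (mat_coeff 0 S) = mat_coeff 0 R"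
proof
  define S where "S = mat_map (\<lambda>F. Abs_fps (\<lambda>n. fls_regpart (F $ n))) R"
  have "fls_is_fps (R $ i $ j $ n)" for i j n
    using assms[of n] by (simp add: mat_is_fps_def mat_coeff_def mat_map_def)
  then show "R = mat_map incl S"
    by (simp add: vec_eq_iff S_def mat_map_def incl_def fps_eq_iff fps_to_fls_regpart_of_is_fps)
  then show "mat_map fps_to_fls (mat_coeff 0 S) = mat_coeff 0 R"
    by (simp add: vec_eq_iff mat_coeff_def mat_map_def incl_def)
qed

theorem lemma4p3:
  fixes t d :: "complex fps"
    and A :: "complex fps fps^2^2"
    and R :: "complex fls fps^2^2"
  assumes simple_zero: "subdegree (t^2 - 4 * d) = 1"
    and trA: "trace (mat_map at_lambda0 A) = t"
    and detA: "det (mat_map at_lambda0 A) = d"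
    and R_inv: "invertible R"
    and R0: "\<exists>R0 :: complex fps^2^2. invertible R0 \<and> mat_map fps_to_fls R0 = mat_map at_lambda0 R"
    and gauge_hol: "\<exists>G :: complex fps fps^2^2. gauge A R = mat_map incl G"
  shows "\<exists>S :: complex fps fps^2^2. invertible S \<and> R = mat_map incl S"
proof -
  have at_lambda0: "mat_map at_lambda0 = mat_coeff 0"
    by (simp add: fun_eq_iff mat_coeff_def at_lambda0_def[abs_def])
  obtain G where G: "gauge A R = mat_map incl G"
    using gauge_hol by blast
  obtain M0 where M0: "invertible M0" and R_0: "mat_coeff 0 R = mat_map fps_to_fls M0"
    using R0 by (auto simp: at_lambda0)
  define M N where "M = mat_map fps_to_fls M0" and "N = mat_map fps_to_fls (matrix_inv M0)"
  have MN: "M ** N = mat 1" and NM: "N ** M = mat 1"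
    using M0 by (simp_all add: M_def N_def matrix_inv_right matrix_inv_left mat_map_fps_to_fls_mat
        flip: mat_map_fps_to_fls_mult)
  have "(trace (mat_coeff 0 (mat_map incl A)))\<^sup>2 - 4 * det (mat_coeff 0 (mat_map incl A)) =
      fps_to_fls (t\<^sup>2 - 4 * d)"
    using trA detA by (simp add: mat_coeff_mat_map_incl at_lambda0 trace_mat_map_fps_to_fls
        det_mat_map_fps_to_fls fps_to_fls_power fls_times_fps_to_fls)
  then have disc: "fls_subdegree ((trace (mat_coeff 0 (mat_map incl A)))\<^sup>2
      - 4 * det (mat_coeff 0 (mat_map incl A))) = 1"
    by (simp only: fls_subdegree_fls_to_fps simple_zero of_nat_1)
  have "mat_is_fps (mat_coeff n R)" for n
    by (rule gauge_coeff_eqs_mat_is_fps[OF gauge_coeff_eqs_of_gauge[OF R_inv G] _ _ R_0[folded M_def]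
          MN NM _ _ disc]) (simp_all add: M_def N_def mat_coeff_mat_map_incl)
  then obtain S where S: "R = mat_map incl S" and "mat_map fps_to_fls (mat_coeff 0 S) = mat_coeff 0 R"
    by (rule mat_map_incl_of_mat_coeff_is_fps)
  then have "mat_coeff 0 S = M0"
    by (simp add: R_0 vec_eq_iff mat_map_def)
  then show ?thesis
    using S M0 invertible_of_invertible_mat_coeff_0 by blast
qed

end
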